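(* Let $F\in\mathrm{GL}^+(2)$ and $H\in\mathbb{R}^{2\times2}$ such that $\operatorname{rank}(H)=1$ and $F+H\in\mathrm{GL}^+(2)$. Then there exists at most one $t\in[0,1]$ such that $F+tH$ has non-simple singular values (i.e. its two singular values coincide).
   Context: $\mathrm{GL}^+(2)$ is the group of real invertible $2\times2$ matrices with positive determinant. *)

theory Defs
  imports "HOL-Analysis.Analysis"
begin

definition GLplus2 :: "(real^2^2) set" where
  "GLplus2 = {A. det A > 0}"

text \<open>Singular values of a real 2x2 matrix A: the square roots of the eigenvalues
  of transpose A ** A, counted with multiplicity, ordered decreasingly.\<close>
definition singular_values2 :: "real^2^2 \<Rightarrow> real \<times> real" where
  "singular_values2 A = (THE p. fst p \<ge> snd p \<and> snd p \<ge> 0 \<and>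
     (\<forall>x::real. det (x *\<^sub>R mat 1 - transpose A ** A) = (x - (fst p)^2) * (x - (snd p)^2)))"

definition nonsimple_sv :: "real^2^2 \<Rightarrow> bool" where
  "nonsimple_sv A \<longleftrightarrow> fst (singular_values2 A) = snd (singular_values2 A)"

end

theory Submission
  imports Defs
begin

(* For a 2x2 matrix A the characteristic polynomial of A^T A is x^2 - |A|^2 x + (det A)^2, where
   |A| is the Frobenius norm (the norm of real^2^2), so the two singular values coincide iff
   |A|^2 = 2 |det A|. If det A >= 0 this reads (a11 - a22)^2 + (a12 + a21)^2 = 0, i.e. A is
   conformal: A = [[a, -b], [b, a]]. Conformal matrices form a linear subspace whose only singular
   element is 0, so the line F + tH, with H of rank one, meets it at most once. Along this line
   det (F + tH) is affine in t because det H = 0, hence positive on [0, 1]. *)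

lemma norm_sq_matrix2:
  fixes A :: "real^2^2"
  shows "(norm A)\<^sup>2 = (A$1$1)\<^sup>2 + (A$1$2)\<^sup>2 + (A$2$1)\<^sup>2 + (A$2$2)\<^sup>2"
  unfolding power2_norm_eq_inner inner_vec_def sum_2 by (simp add: power2_eq_square)

lemma charpoly_transpose_mult2:
  fixes A :: "real^2^2"
  shows "det (x *\<^sub>R mat 1 - transpose A ** A) = x\<^sup>2 - (norm A)\<^sup>2 * x + (det A)\<^sup>2"
  unfolding norm_sq_matrix2 by (simp add: det_2 matrix_matrix_mult_def sum_2 transpose_def mat_def
      power2_eq_square algebra_simps)

lemma norm_sq_minus_twice_det2:
  fixes A :: "real^2^2"
  shows "(norm A)\<^sup>2 - 2 * det A = (A$1$1 - A$2$2)\<^sup>2 + (A$1$2 + A$2$1)\<^sup>2"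
  unfolding norm_sq_matrix2 by (simp add: det_2 power2_eq_square algebra_simps)

lemma norm_sq_plus_twice_det2:
  fixes A :: "real^2^2"
  shows "(norm A)\<^sup>2 + 2 * det A = (A$1$1 + A$2$2)\<^sup>2 + (A$1$2 - A$2$1)\<^sup>2"
  unfolding norm_sq_matrix2 by (simp add: det_2 power2_eq_square algebra_simps)

lemma twice_abs_det_le_norm_sq2:
  fixes A :: "real^2^2"
  shows "2 * \<bar>det A\<bar> \<le> (norm A)\<^sup>2"
  using norm_sq_minus_twice_det2[of A] norm_sq_plus_twice_det2[of A]
  by (smt (verit) zero_le_power2)

lemma vieta_quadratic:
  fixes s p a b :: "'a::comm_ring_1"
  assumes "\<forall>x. x\<^sup>2 - s * x + p = (x - a) * (x - b)"
  shows "a + b = s" and "a * b = p"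
proof -
  show ab: "a * b = p" using assms[rule_format, of 0] by simp
  show "a + b = s" using assms[rule_format, of 1] ab by (simp add: algebra_simps)
qed

lemma ordered_sq_roots_unique:
  fixes s p a b c d :: real
  assumes "b \<le> a" "0 \<le> b" "d \<le> c" "0 \<le> d"
    and ab: "\<forall>x. x\<^sup>2 - s * x + p = (x - a\<^sup>2) * (x - b\<^sup>2)"
    and cd: "\<forall>x. x\<^sup>2 - s * x + p = (x - c\<^sup>2) * (x - d\<^sup>2)"
  shows "a = c \<and> b = d"
proof -
  have sum: "a\<^sup>2 + b\<^sup>2 = c\<^sup>2 + d\<^sup>2" and prod: "a\<^sup>2 * b\<^sup>2 = c\<^sup>2 * d\<^sup>2"
    using vieta_quadratic[OF ab] vieta_quadratic[OF cd] by simp_all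
  have "(a\<^sup>2 - b\<^sup>2)\<^sup>2 = (a\<^sup>2 + b\<^sup>2)\<^sup>2 - 4 * (a\<^sup>2 * b\<^sup>2)"
    by (simp add: algebra_simps power2_eq_square)
  also have "\<dots> = (c\<^sup>2 + d\<^sup>2)\<^sup>2 - 4 * (c\<^sup>2 * d\<^sup>2)"
    by (simp only: sum prod)
  also have "\<dots> = (c\<^sup>2 - d\<^sup>2)\<^sup>2"
    by (simp add: algebra_simps power2_eq_square)
  finally have "(a\<^sup>2 - b\<^sup>2)\<^sup>2 = (c\<^sup>2 - d\<^sup>2)\<^sup>2" .
  moreover have "b\<^sup>2 \<le> a\<^sup>2" "d\<^sup>2 \<le> c\<^sup>2" using assms(1-4) by (simp_all add: power_mono)
  ultimately have "a\<^sup>2 - b\<^sup>2 = c\<^sup>2 - d\<^sup>2" by (simp add: power2_eq_iff_nonneg)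
  with sum have "a\<^sup>2 = c\<^sup>2" "b\<^sup>2 = d\<^sup>2" by simp_all
  with assms(1-4) show ?thesis by (smt (verit) power2_eq_iff_nonneg)
qed

lemma monic_quadratic_ordered_sq_roots:
  fixes s p :: real
  assumes "2 * \<bar>p\<bar> \<le> s"
  obtains a b where "b \<le> a" "0 \<le> b" "\<forall>x. x\<^sup>2 - s * x + p\<^sup>2 = (x - a\<^sup>2) * (x - b\<^sup>2)"
proof
  define r where "r = sqrt (s\<^sup>2 - 4 * p\<^sup>2)"
  have "(2 * \<bar>p\<bar>)\<^sup>2 \<le> s\<^sup>2" by (rule power_mono[OF assms]) simp
  hence "4 * p\<^sup>2 \<le> s\<^sup>2" by (simp add: power_mult_distrib)
  hence r: "0 \<le> r" "r\<^sup>2 = s\<^sup>2 - 4 * p\<^sup>2" "r \<le> s"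
    using assms by (auto simp: r_def real_sqrt_le_iff')
  show "sqrt ((s - r) / 2) \<le> sqrt ((s + r) / 2)" "0 \<le> sqrt ((s - r) / 2)"
    using r by simp_all
  show "\<forall>x. x\<^sup>2 - s * x + p\<^sup>2 = (x - (sqrt ((s + r) / 2))\<^sup>2) * (x - (sqrt ((s - r) / 2))\<^sup>2)"
    using r by (simp add: field_simps power2_eq_square)
qed

(* The predicate under THE in singular_values2_def, with the characteristic polynomial expanded. *)
definition singular_values2_spec :: "real^2^2 \<Rightarrow> real \<times> real \<Rightarrow> bool" where
  "singular_values2_spec A p \<longleftrightarrow> snd p \<le> fst p \<and> 0 \<le> snd p \<and>
     (\<forall>x. x\<^sup>2 - (norm A)\<^sup>2 * x + (det A)\<^sup>2 = (x - (fst p)\<^sup>2) * (x - (snd p)\<^sup>2))"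

lemma ex1_singular_values2_spec: "\<exists>!p. singular_values2_spec A p"
proof -
  obtain a b where "b \<le> a" "0 \<le> b"
    "\<forall>x. x\<^sup>2 - (norm A)\<^sup>2 * x + (det A)\<^sup>2 = (x - a\<^sup>2) * (x - b\<^sup>2)"
    using monic_quadratic_ordered_sq_roots[OF twice_abs_det_le_norm_sq2] .
  hence "singular_values2_spec A (a, b)"
    unfolding singular_values2_spec_def by simp
  moreover have "q = p" if "singular_values2_spec A p" "singular_values2_spec A q" for p q
  proof -
    have "fst q = fst p \<and> snd q = snd p"
      using that unfolding singular_values2_spec_def
      by (intro ordered_sq_roots_unique[where s = "(norm A)\<^sup>2" and p = "(det A)\<^sup>2"]) auto
    thus ?thesis by (simp add: prod_eq_iff)
  qed
  ultimately show ?thesis by blast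
qed

lemma singular_values2_eq_iff: "singular_values2 A = p \<longleftrightarrow> singular_values2_spec A p"
proof -
  have "singular_values2 A = (THE p. singular_values2_spec A p)"
    unfolding singular_values2_def singular_values2_spec_def charpoly_transpose_mult2
    by simp
  thus ?thesis
    using the1_equality[OF ex1_singular_values2_spec] theI'[OF ex1_singular_values2_spec]
    by metis
qed

lemma nonsimple_sv_iff_norm_sq:
  fixes A :: "real^2^2"
  shows "nonsimple_sv A \<longleftrightarrow> (norm A)\<^sup>2 = 2 * \<bar>det A\<bar>"
proof
  define \<sigma> where "\<sigma> = fst (singular_values2 A)"
  assume "nonsimple_sv A"
  hence "singular_values2 A = (\<sigma>, \<sigma>)"
    unfolding nonsimple_sv_def \<sigma>_def by (simp add: prod_eq_iff)
  hence "\<forall>x. x\<^sup>2 - (norm A)\<^sup>2 * x + (det A)\<^sup>2 = (x - \<sigma>\<^sup>2) * (x - \<sigma>\<^sup>2)"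
    unfolding singular_values2_eq_iff singular_values2_spec_def by simp
  from vieta_quadratic[OF this]
  have sum: "\<sigma>\<^sup>2 + \<sigma>\<^sup>2 = (norm A)\<^sup>2" and prod: "\<sigma>\<^sup>2 * \<sigma>\<^sup>2 = (det A)\<^sup>2" .
  have "(\<sigma>\<^sup>2)\<^sup>2 = \<bar>det A\<bar>\<^sup>2"
    using prod by (simp only: power2_abs power2_eq_square[of "\<sigma>\<^sup>2"])
  hence "\<sigma>\<^sup>2 = \<bar>det A\<bar>"
    using power2_eq_iff_nonneg[of "\<sigma>\<^sup>2" "\<bar>det A\<bar>"] by simp
  with sum show "(norm A)\<^sup>2 = 2 * \<bar>det A\<bar>" by simp
next
  assume norm_sq: "(norm A)\<^sup>2 = 2 * \<bar>det A\<bar>"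
  have "x\<^sup>2 - 2 * \<bar>det A\<bar> * x + (det A)\<^sup>2 = (x - \<bar>det A\<bar>) * (x - \<bar>det A\<bar>)" for x
    by (simp add: power2_eq_square algebra_simps)
  with norm_sq have "singular_values2_spec A (sqrt \<bar>det A\<bar>, sqrt \<bar>det A\<bar>)"
    unfolding singular_values2_spec_def by simp
  thus "nonsimple_sv A"
    unfolding nonsimple_sv_def singular_values2_eq_iff[symmetric] by simp
qed

definition conformal2 :: "real^2^2 \<Rightarrow> bool" where
  "conformal2 A \<longleftrightarrow> A$1$1 = A$2$2 \<and> A$1$2 = - A$2$1"

lemma subspace_conformal2: "subspace (Collect conformal2)"
  unfolding subspace_def conformal2_def by simp

lemma conformal2_det_eq_0_iff:
  assumes "conformal2 A"
  shows "det A = 0 \<longleftrightarrow> A = 0"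
proof -
  have "det A = (A$1$1)\<^sup>2 + (A$2$1)\<^sup>2"
    using assms unfolding conformal2_def det_2 by (simp add: power2_eq_square)
  with assms show ?thesis
    unfolding conformal2_def by (auto simp: sum_power2_eq_zero_iff vec_eq_iff forall_2)
qed

lemma nonsimple_sv_iff_conformal2:
  fixes A :: "real^2^2"
  assumes "0 \<le> det A"
  shows "nonsimple_sv A \<longleftrightarrow> conformal2 A"
proof -
  have "nonsimple_sv A \<longleftrightarrow> (norm A)\<^sup>2 - 2 * det A = 0"
    using assms by (simp add: nonsimple_sv_iff_norm_sq)
  also have "\<dots> \<longleftrightarrow> conformal2 A"
    unfolding norm_sq_minus_twice_det2 sum_power2_eq_zero_iff conformal2_def eq_neg_iff_add_eq_0
    by simp
  finally show ?thesis .
qed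

lemma det2_on_line:
  fixes F H :: "real^2^2"
  assumes "det H = 0"
  shows "det (F + t *\<^sub>R H) = (1 - t) * det F + t * det (F + H)"
  using assms unfolding det_2 by (simp add: algebra_simps power2_eq_square)

lemma GLplus2_segment:
  assumes "F \<in> GLplus2" "F + H \<in> GLplus2" "det H = 0" "t \<in> {0..1}"
  shows "F + t *\<^sub>R H \<in> GLplus2"
proof -
  have "0 < (1 - t) * det F + t * det (F + H)"
    using assms unfolding GLplus2_def
    by (cases "t = 1") (auto intro: add_pos_nonneg)
  with assms(3) show ?thesis
    unfolding GLplus2_def by (simp add: det2_on_line)
qed

theorem corollary3p10:
  fixes F H :: "real^2^2"
  assumes "F \<in> GLplus2"
    and "rank H = 1"
    and "F + H \<in> GLplus2"
  shows "\<forall>s\<in>{0..1}. \<forall>t\<in>{0..1}. nonsimple_sv (F + s *\<^sub>R H) \<and> nonsimple_sv (F + t *\<^sub>R H) \<longrightarrow> s = t"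
proof (intro ballI impI)
  fix s t :: real
  assume "s \<in> {0..1}" "t \<in> {0..1}"
    and nonsimple: "nonsimple_sv (F + s *\<^sub>R H) \<and> nonsimple_sv (F + t *\<^sub>R H)"
  have "det H = 0" "H \<noteq> 0"
    using assms(2) det_eq_0_rank[of H] rank_eq_0[of H] by auto
  have "conformal2 (F + u *\<^sub>R H)" if "u \<in> {0..1}" "nonsimple_sv (F + u *\<^sub>R H)" for u
    using GLplus2_segment[OF assms(1,3) \<open>det H = 0\<close> that(1)] that(2)
    unfolding GLplus2_def by (metis less_imp_le mem_Collect_eq nonsimple_sv_iff_conformal2)
  with nonsimple \<open>s \<in> {0..1}\<close> \<open>t \<in> {0..1}\<close>
  have conf: "conformal2 (F + s *\<^sub>R H)" "conformal2 (F + t *\<^sub>R H)" by auto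
  show "s = t"
  proof (rule ccontr)
    assume "s \<noteq> t"
    have "H = (1 / (s - t)) *\<^sub>R ((F + s *\<^sub>R H) - (F + t *\<^sub>R H))"
      using \<open>s \<noteq> t\<close> by (simp add: algebra_simps flip: scaleR_diff_left)
    hence "conformal2 H"
      using subspace_conformal2 conf by (metis mem_Collect_eq subspace_diff subspace_mul)
    with \<open>det H = 0\<close> \<open>H \<noteq> 0\<close> show False
      by (simp add: conformal2_det_eq_0_iff)
  qed
qed

end
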